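(* Let $p>1$ and, for $h\in(0,1)$, let $a_h(x)=1$ for $x\in[0,\tfrac{1-h}{2}]\cup[\tfrac{1+h}{2},1]$ and $a_h(x)=0$ for $x\in(\tfrac{1-h}{2},\tfrac{1+h}{2})$. For any given $\lambda\in(\pi^2/4,\pi^2)$, there exists $R_\lambda>0$ such that, for every $R>R_\lambda$, there is $h=h(R)\in(0,1)$ for which the problem $$-u''=\lambda u+a_h(x)u^p \ \text{ in } (0,1),\qquad u(0)=u(1)=0,$$ has at least two asymmetric positive solutions $u$ with $\|u\|_\infty=R$. Moreover, $\lim_{R\uparrow+\infty}h(R)=1$.
   Context: A solution is a function $u\in\mathcal{C}^1([0,1])$ with $u'$ absolutely continuous satisfying the equation a.e. and the boundary conditions; a positive solution satisfies $u>0$ in $(0,1)$. A solution is asymmetric if $u(x)\neq u(1-x)$ for some $x\in[0,1]$. *)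

theory Defs
  imports "HOL-Analysis.Analysis"
begin

definition abs_cont_on :: "(real \<Rightarrow> real) \<Rightarrow> real \<Rightarrow> real \<Rightarrow> bool" where
  "abs_cont_on f a b \<longleftrightarrow>
     (\<forall>\<epsilon>>0. \<exists>\<delta>>0. \<forall>(n::nat) (xs::nat \<Rightarrow> real) (ys::nat \<Rightarrow> real).
        (\<forall>i<n. a \<le> xs i \<and> xs i \<le> ys i \<and> ys i \<le> b) \<and>
        (\<forall>i<n. \<forall>j<n. i \<noteq> j \<longrightarrow> ys i \<le> xs j \<or> ys j \<le> xs i) \<and>
        (\<Sum>i<n. ys i - xs i) < \<delta>
        \<longrightarrow> (\<Sum>i<n. \<bar>f (ys i) - f (xs i)\<bar>) < \<epsilon>)"

definition a_h :: "real \<Rightarrow> real \<Rightarrow> real" where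
  "a_h h x = (if (1 - h) / 2 < x \<and> x < (1 + h) / 2 then 0 else 1)"

definition is_solution :: "real \<Rightarrow> real \<Rightarrow> real \<Rightarrow> (real \<Rightarrow> real) \<Rightarrow> bool" where
  "is_solution p lam h u \<longleftrightarrow>
     (\<exists>u'. (\<forall>x\<in>{0..1}. (u has_real_derivative u' x) (at x within {0..1})) \<and>
           continuous_on {0..1} u' \<and>
           abs_cont_on u' 0 1 \<and>
           (AE x in lebesgue. x \<in> {0<..<1} \<longrightarrow>
              (u' has_real_derivative (- (lam * u x + a_h h x * u x powr p))) (at x))) \<and>
     u 0 = 0 \<and> u 1 = 0"

definition is_positive :: "(real \<Rightarrow> real) \<Rightarrow> bool" where
  "is_positive u \<longleftrightarrow> (\<forall>x\<in>{0<..<1}. u x > 0)"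

definition is_asymmetric :: "(real \<Rightarrow> real) \<Rightarrow> bool" where
  "is_asymmetric u \<longleftrightarrow> (\<exists>x\<in>{0..1}. u x \<noteq> u (1 - x))"

definition sup_norm01 :: "(real \<Rightarrow> real) \<Rightarrow> real" where
  "sup_norm01 u = (SUP x\<in>{0..1}. \<bar>u x\<bar>)"

end

theory Submission
  imports Defs
begin

text \<open>
  On the two outer intervals, where \<open>a_h = 1\<close>, a positive solution rising from \<open>0\<close> to height
  \<open>c\<close> conserves the energy \<open>u'^2 + lam u^2 + 2/(p+1) u^(p+1)\<close>, so the time it needs is an
  explicit integral \<open>tau c\<close>. On the middle interval the equation is linear, and a solution of
  maximum \<open>R\<close> is \<open>R cos (sqrt lam (x - x0))\<close> there. Gluing an outer arc that reaches
  \<open>R cos \<alpha>\<close> at time \<open>L\<close>, the cosine on \<open>[L, 1 - L]\<close>, and the mirror image of an outer arc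
  reaching \<open>R cos \<beta>\<close> gives a solution for \<open>h = 1 - 2 L\<close> as soon as
  \<open>tau (R cos \<alpha>) = tau (R cos \<beta>) = L\<close> and \<open>\<alpha> + \<beta> = sqrt lam (1 - 2 L)\<close>. If \<open>\<alpha> \<noteq> \<beta>\<close> the
  solution is asymmetric, and swapping \<open>\<alpha>\<close> and \<open>\<beta>\<close> gives a second one. Since
  \<open>tau (R cos \<alpha>) = O(R^((1-p)/2))\<close>, for large \<open>R\<close> an intermediate value argument in \<open>\<alpha>\<close>
  produces such a pair with \<open>L \<rightarrow> 0\<close>, that is \<open>h \<rightarrow> 1\<close>.
\<close>

section \<open>Gluing functions of one real variable\<close>

lemma has_real_derivative_if_le:
  fixes f g :: "real \<Rightarrow> real"
  assumes f: "(f has_real_derivative D) (at s)" and g: "(g has_real_derivative D) (at s)"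
    and "f s = g s"
  shows "((\<lambda>x. if x \<le> s then f x else g x) has_real_derivative D) (at s)"
proof -
  let ?h = "\<lambda>x. if x \<le> s then f x else g x"
  have "(?h has_real_derivative D) (at s within {..s})"
    by (rule has_field_derivative_transform_within[OF has_field_derivative_at_within[OF f], of 1])
      auto
  moreover have "(?h has_real_derivative D) (at s within {s..})"
    by (rule has_field_derivative_transform_within[OF has_field_derivative_at_within[OF g], of 1])
      (use assms in auto)
  ultimately have "(?h has_real_derivative D) (at s within ({..s} \<union> {s..}))"
    unfolding has_field_derivative_iff Lim_within_Un by auto
  moreover have "{..s} \<union> {s..} = (UNIV :: real set)" by auto
  ultimately show ?thesis by simp
qed

definition splice :: "real \<Rightarrow> real \<Rightarrow> (real \<Rightarrow> 'a) \<Rightarrow> (real \<Rightarrow> 'a) \<Rightarrow> (real \<Rightarrow> 'a) \<Rightarrow> real \<Rightarrow> 'a"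
  where "splice s t f g h x = (if x \<le> s then f x else if x \<le> t then g x else h x)"

lemma has_real_derivative_splice_off_knots:
  fixes f g h :: "real \<Rightarrow> real"
  assumes f: "\<And>x. x \<in> {a<..<s} \<Longrightarrow> (f has_real_derivative f' x) (at x)"
    and g: "\<And>x. x \<in> {s<..<t} \<Longrightarrow> (g has_real_derivative g' x) (at x)"
    and h: "\<And>x. x \<in> {t<..<b} \<Longrightarrow> (h has_real_derivative h' x) (at x)"
    and x: "x \<in> {a<..<b}" "x \<noteq> s" "x \<noteq> t" and "s \<le> t"
  shows "(splice s t f g h has_real_derivative splice s t f' g' h' x) (at x)"
proof -
  consider "x < s" | "s < x" "x < t" | "t < x" using x \<open>s \<le> t\<close> by fastforce
  then show ?thesis
  proof cases
    case 1
    have "(splice s t f g h has_real_derivative f' x) (at x)"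
      by (rule has_field_derivative_transform_within_open[OF f, of x "{a<..<s}"])
        (use x 1 in \<open>auto simp: splice_def\<close>)
    then show ?thesis using 1 by (simp add: splice_def)
  next
    case 2
    have "(splice s t f g h has_real_derivative g' x) (at x)"
      by (rule has_field_derivative_transform_within_open[OF g, of x "{s<..<t}"])
        (use x 2 in \<open>auto simp: splice_def\<close>)
    then show ?thesis using 2 by (simp add: splice_def)
  next
    case 3
    have "(splice s t f g h has_real_derivative h' x) (at x)"
      by (rule has_field_derivative_transform_within_open[OF h, of x "{t<..<b}"])
        (use x 3 \<open>s \<le> t\<close> in \<open>auto simp: splice_def\<close>)
    then show ?thesis using 3 \<open>s \<le> t\<close> by (simp add: splice_def)
  qed
qed

lemma has_real_derivative_splice:
  fixes f g h :: "real \<Rightarrow> real"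
  assumes f: "\<And>x. x \<in> {a..s} \<Longrightarrow> (f has_real_derivative f' x) (at x)"
    and g: "\<And>x. x \<in> {s..t} \<Longrightarrow> (g has_real_derivative g' x) (at x)"
    and h: "\<And>x. x \<in> {t..b} \<Longrightarrow> (h has_real_derivative h' x) (at x)"
    and fg: "f s = g s" "f' s = g' s" and gh: "g t = h t" "g' t = h' t"
    and "s < t" and x: "x \<in> {a..b}"
  shows "(splice s t f g h has_real_derivative splice s t f' g' h' x) (at x)"
proof -
  consider "x < s" | "x = s" | "s < x" "x < t" | "x = t" | "t < x" by fastforce
  then show ?thesis
  proof cases
    case 1
    then show ?thesis
      using has_field_derivative_transform_within_open[OF f, of x "{..<s}" "splice s t f g h"] x
      by (auto simp: splice_def)
  next
    case 2
    have "((\<lambda>y. if y \<le> s then f y else g y) has_real_derivative f' s) (at s)"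
      using f[of s] g[of s] fg \<open>s < t\<close> x 2 by (intro has_real_derivative_if_le) auto
    then show ?thesis
      using has_field_derivative_transform_within_open[of _ _ s "{..<t}" "splice s t f g h"]
        \<open>s < t\<close> 2
      by (auto simp: splice_def)
  next
    case 3
    then show ?thesis
      using has_field_derivative_transform_within_open[OF g, of x "{s<..<t}" "splice s t f g h"]
      by (auto simp: splice_def)
  next
    case 4
    have "((\<lambda>y. if y \<le> t then g y else h y) has_real_derivative g' t) (at t)"
      using g[of t] h[of t] gh \<open>s < t\<close> x 4 by (intro has_real_derivative_if_le) auto
    then show ?thesis
      using has_field_derivative_transform_within_open[of _ _ t "{s<..}" "splice s t f g h"]
        \<open>s < t\<close> 4
      by (auto simp: splice_def)
  next
    case 5
    then show ?thesis
      using has_field_derivative_transform_within_open[OF h, of x "{t<..}" "splice s t f g h"]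
        x \<open>s < t\<close>
      by (auto simp: splice_def)
  qed
qed

lemma has_real_derivative_reflect:
  assumes "(f has_real_derivative D) (at (1 - x))"
  shows "((\<lambda>y. f (1 - y)) has_real_derivative - D) (at x)"
proof -
  have "((\<lambda>y. 1 - y) has_real_derivative - 1) (at x)"
    by (auto intro!: derivative_eq_intros)
  from DERIV_chain2[OF assms this] show ?thesis by simp
qed

lemma lipschitz_on_splice:
  fixes f g h :: "real \<Rightarrow> real"
  assumes "K-lipschitz_on {a..s} f" "K-lipschitz_on {s..t} g" "K-lipschitz_on {t..b} h"
    and "f s = g s" "g t = h t" "s \<le> t"
  shows "K-lipschitz_on {a..b} (splice s t f g h)"
proof -
  have "K-lipschitz_on {a..t} (\<lambda>x. if x \<le> s then f x else g x)"
    by (rule lipschitz_on_concat) (use assms in auto)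
  then have "K-lipschitz_on {a..b} (\<lambda>x. if x \<le> t then (if x \<le> s then f x else g x) else h x)"
    by (rule lipschitz_on_concat) (use assms in auto)
  then show ?thesis
    by (rule lipschitz_on_transform) (use assms in \<open>auto simp: splice_def\<close>)
qed

lemma lipschitz_on_reflect:
  fixes f :: "real \<Rightarrow> real"
  assumes "K-lipschitz_on {0..L} f"
  shows "K-lipschitz_on {1 - L..1} (\<lambda>x. - f (1 - x))"
proof (rule lipschitz_onI)
  show "dist (- f (1 - x)) (- f (1 - y)) \<le> K * dist x y"
    if "x \<in> {1 - L..1}" "y \<in> {1 - L..1}" for x y
    using lipschitz_onD[OF assms, of "1 - x" "1 - y"] that
    by (simp add: dist_real_def abs_minus_commute)
qed (rule lipschitz_on_nonneg[OF assms])

lemma lipschitz_on_Icc_of_deriv_bound: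
  fixes g g' :: "real \<Rightarrow> real"
  assumes "continuous_on {a..b} g"
    and "\<And>x. x \<in> {a<..<b} \<Longrightarrow> (g has_real_derivative g' x) (at x)"
    and "\<And>x. x \<in> {a<..<b} \<Longrightarrow> \<bar>g' x\<bar> \<le> K" "0 \<le> K"
  shows "K-lipschitz_on {a..b} g"
proof (rule lipschitz_onI)
  show "dist (g x) (g y) \<le> K * dist x y" if "x \<in> {a..b}" "y \<in> {a..b}" for x y
  proof -
    have *: "\<bar>g v - g u\<bar> \<le> K * (v - u)" if "a \<le> u" "u < v" "v \<le> b" for u v
    proof -
      have "continuous_on {u..v} g"
        by (rule continuous_on_subset[OF assms(1)]) (use that in auto)
      moreover have "(g has_derivative (*) (g' z)) (at z)" if "u < z" "z < v" for z
        using assms(2)[of z] that \<open>a \<le> u\<close> \<open>v \<le> b\<close> by (simp add: has_field_derivative_def)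
      ultimately obtain z where z: "z \<in> {u<..<v}" "\<bar>g v - g u\<bar> \<le> \<bar>g' z * (v - u)\<bar>"
        using mvt_general[OF \<open>u < v\<close>] by force
      have "\<bar>g' z\<bar> \<le> K" using assms(3) z(1) that by auto
      with z(2) \<open>u < v\<close> show ?thesis
        by (simp add: abs_mult mult.commute mult_right_mono order_trans)
    qed
    consider "x < y" | "y < x" | "x = y" by linarith
    then show ?thesis
      using *[of x y] *[of y x] that assms(4) by cases (auto simp: dist_real_def abs_minus_commute)
  qed
qed fact

lemma lipschitz_on_imp_abs_cont_on:
  fixes g :: "real \<Rightarrow> real"
  assumes "K-lipschitz_on {a..b} g"
  shows "abs_cont_on g a b"
  unfolding abs_cont_on_def
proof (intro allI impI)
  fix e :: real assume "e > 0"
  have K: "K \<ge> 0" using assms by (rule lipschitz_on_nonneg)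
  show "\<exists>d>0. \<forall>n xs ys. (\<forall>i<n. a \<le> xs i \<and> xs i \<le> ys i \<and> ys i \<le> b) \<and>
        (\<forall>i<n. \<forall>j<n. i \<noteq> j \<longrightarrow> ys i \<le> xs j \<or> ys j \<le> xs i) \<and>
        (\<Sum>i<n. ys i - xs i) < d \<longrightarrow> (\<Sum>i<n. \<bar>g (ys i) - g (xs i)\<bar>) < e"
  proof (intro exI[of _ "e / (K + 1)"] conjI allI impI)
    show "e / (K + 1) > 0" using \<open>e > 0\<close> K by simp
    fix n xs ys
    assume h: "(\<forall>i<n. a \<le> xs i \<and> xs i \<le> ys i \<and> ys i \<le> b) \<and>
        (\<forall>i<n. \<forall>j<n. i \<noteq> j \<longrightarrow> ys i \<le> xs j \<or> ys j \<le> xs i) \<and>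
        (\<Sum>i<n. ys i - xs i) < e / (K + 1)"
    have "(\<Sum>i<n. \<bar>g (ys i) - g (xs i)\<bar>) \<le> (\<Sum>i<n. (K + 1) * (ys i - xs i))"
    proof (rule sum_mono)
      fix i assume "i \<in> {..<n}"
      then have i: "a \<le> xs i" "xs i \<le> ys i" "ys i \<le> b" using h by auto
      have "\<bar>g (ys i) - g (xs i)\<bar> \<le> K * (ys i - xs i)"
        using lipschitz_onD[OF assms, of "ys i" "xs i"] i by (simp add: dist_real_def)
      also have "\<dots> \<le> (K + 1) * (ys i - xs i)" using i by (simp add: mult_right_mono)
      finally show "\<bar>g (ys i) - g (xs i)\<bar> \<le> (K + 1) * (ys i - xs i)" .
    qed
    also have "\<dots> = (K + 1) * (\<Sum>i<n. ys i - xs i)" by (simp add: sum_distrib_left)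
    also have "\<dots> < e" using h K by (simp add: field_simps)
    finally show "(\<Sum>i<n. \<bar>g (ys i) - g (xs i)\<bar>) < e" .
  qed
qed

lemma the_inv_into_Icc_has_real_derivative:
  fixes f :: "real \<Rightarrow> real"
  assumes deriv: "\<And>y. y \<in> {a..b} \<Longrightarrow> (f has_real_derivative f' y) (at y)"
    and pos: "\<And>y. y \<in> {a..b} \<Longrightarrow> 0 < f' y"
    and "a < b" and x: "x \<in> {f a<..<f b}"
  defines "g \<equiv> the_inv_into {a..b} f"
  shows "g x \<in> {a<..<b}" "f (g x) = x" "(g has_real_derivative inverse (f' (g x))) (at x)"
proof -
  have less: "f y < f z" if "a \<le> y" "y < z" "z \<le> b" for y z
  proof (rule DERIV_pos_imp_increasing[OF \<open>y < z\<close>])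
    fix t assume "y \<le> t" "t \<le> z"
    then show "\<exists>D. (f has_real_derivative D) (at t) \<and> D > 0"
      using deriv[of t] pos[of t] that by auto
  qed
  have inj: "inj_on f {a..b}"
    by (rule strict_mono_on_imp_inj_on) (use less in \<open>force simp: strict_mono_on_def\<close>)
  have cont: "continuous_on {a..b} f"
    by (intro continuous_at_imp_continuous_on ballI DERIV_isCont[OF deriv])
  have image: "{f a..f b} \<subseteq> f ` {a..b}"
  proof
    fix y assume "y \<in> {f a..f b}"
    then obtain z where "a \<le> z" "z \<le> b" "f z = y"
      using IVT'[of f a y b] cont \<open>a < b\<close> by auto
    then show "y \<in> f ` {a..b}" by auto
  qed
  have g_in: "g y \<in> {a..b}" and f_g: "f (g y) = y" if "y \<in> {f a..f b}" for y
    using the_inv_into_into[OF inj, of y "{a..b}"] f_the_inv_into_f[OF inj, of y] image that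
    by (auto simp: g_def)
  show "f (g x) = x" using f_g x by auto
  then show g_x: "g x \<in> {a<..<b}" using g_in[of x] x by (cases "g x = a \<or> g x = b") auto
  have "continuous_on {f a..f b} g"
    unfolding g_def
    by (rule continuous_on_subset[OF continuous_on_inv_into[OF cont _ inj] image]) simp
  then have "isCont g x"
    using continuous_on_interior[of "{f a..f b}" g x] x by auto
  then show "(g has_real_derivative inverse (f' (g x))) (at x)"
    using x g_x pos[of "g x"] f_g deriv[of "g x"]
    by (intro DERIV_inverse_function[where f = f and a = "f a" and b = "f b"]) auto
qed

lemma integral_from_has_real_derivative:
  fixes f :: "real \<Rightarrow> real"
  assumes "continuous_on UNIV f" and "a < y"
  shows "((\<lambda>x. integral {a..x} f) has_real_derivative f y) (at y)"
proof -
  have "((\<lambda>x. integral {a..x} f) has_real_derivative f y) (at y within {a..y + 1})"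
    using assms by (intro integral_has_real_derivative continuous_on_subset[OF assms(1)]) auto
  then show ?thesis using assms(2) at_within_Icc_at[of a y "y + 1"] by simp
qed

lemma inverse_of_primitive:
  fixes f :: "real \<Rightarrow> real"
  assumes cont: "continuous_on UNIV f" and pos: "\<And>t. f t > 0" and "a < b"
  obtains w
  where "\<And>x. x \<in> {0..integral {a..b} f} \<Longrightarrow> (w has_real_derivative inverse (f (w x))) (at x)"
    and "w 0 = a" and "w (integral {a..b} f) = b"
    and "\<And>x. x \<in> {0<..<integral {a..b} f} \<Longrightarrow> w x \<in> {a<..<b}"
proof -
  define X where "X y = integral {a - 1..y} f - integral {a - 1..a} f" for y
  have X_deriv: "(X has_real_derivative f y) (at y)" if "a - 1 < y" for y
    using integral_from_has_real_derivative[OF cont that] unfolding X_def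
    by (auto intro!: derivative_eq_intros)
  have X_less: "X y < X z" if "a - 1 < y" "y < z" for y z
  proof (rule DERIV_pos_imp_increasing[OF that(2)])
    fix t assume "y \<le> t" "t \<le> z"
    then show "\<exists>D. (X has_real_derivative D) (at t) \<and> D > 0"
      using X_deriv[of t] pos[of t] that(1) by auto
  qed
  have X_a: "X a = 0" by (simp add: X_def)
  have X_b: "X b = integral {a..b} f"
    using Henstock_Kurzweil_Integration.integral_combine[of "a - 1" a b f] \<open>a < b\<close>
      integrable_continuous_interval[OF continuous_on_subset[OF cont]]
    by (simp add: X_def)
  define w where "w = the_inv_into {a - 1/2..b + 1} X"
  have w: "w x \<in> {a - 1/2<..<b + 1}" "X (w x) = x"
    "(w has_real_derivative inverse (f (w x))) (at x)" if "x \<in> {0..integral {a..b} f}" for x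
  proof -
    have "x \<in> {X (a - 1/2)<..<X (b + 1)}"
      using that X_less[of "a - 1/2" a] X_less[of b "b + 1"] X_a X_b \<open>a < b\<close> by auto
    then show "w x \<in> {a - 1/2<..<b + 1}" "X (w x) = x"
      "(w has_real_derivative inverse (f (w x))) (at x)"
      unfolding w_def
      using the_inv_into_Icc_has_real_derivative[of "a - 1/2" "b + 1" X f x] X_deriv pos \<open>a < b\<close>
      by auto
  qed
  have w_eq: "w x = y" if "x \<in> {0..integral {a..b} f}" "a - 1/2 < y" "X y = x" for x y
    using X_less[of y "w x"] X_less[of "w x" y] w(1,2)[OF that(1)] that
    by (cases "w x" y rule: linorder_cases) auto
  show ?thesis
  proof
    show "w 0 = a" "w (integral {a..b} f) = b"
      using w_eq[of 0 a] w_eq[of "integral {a..b} f" b] X_a X_b X_less[of a b] \<open>a < b\<close> by auto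
  next
    fix x assume x: "x \<in> {0<..<integral {a..b} f}"
    then have x': "x \<in> {0..integral {a..b} f}" by auto
    have "w x \<noteq> a" "w x \<noteq> b" using w(2)[OF x'] X_a X_b x by auto
    moreover have "\<not> w x < a" using X_less[of "w x" a] w(1,2)[OF x'] X_a x by auto
    moreover have "\<not> b < w x" using X_less[of b "w x"] w(2)[OF x'] X_b x \<open>a < b\<close> by auto
    ultimately show "w x \<in> {a<..<b}" by auto
  qed (use w in auto)
qed

lemma has_integral_inverse_sqrt_affine:
  fixes a c d :: real
  assumes "0 < a" "0 < d" "0 \<le> c"
  shows "((\<lambda>y. 1 / sqrt (d + a * (c - y))) has_integral 2 * (sqrt (d + a * c) - sqrt d) / a) {0..c}"
proof -
  define G where "G y = -2 * sqrt (d + a * (c - y)) / a" for y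
  have "((\<lambda>y. 1 / sqrt (d + a * (c - y))) has_integral (G c - G 0)) {0..c}"
  proof (rule fundamental_theorem_of_calculus)
    fix y assume "y \<in> {0..c}"
    then have pos: "d + a * (c - y) > 0" using assms by (auto intro: add_pos_nonneg)
    have "(G has_real_derivative (-2 / a) * (inverse (sqrt (d + a * (c - y))) / 2 * (- a))) (at y)"
      unfolding G_def using pos by (auto intro!: derivative_eq_intros)
    moreover have "(-2 / a) * (inverse (sqrt (d + a * (c - y))) / 2 * (- a))
        = 1 / sqrt (d + a * (c - y))"
      using assms by (simp add: divide_simps)
    ultimately show "(G has_vector_derivative 1 / sqrt (d + a * (c - y))) (at y within {0..c})"
      by (simp add: has_real_derivative_iff_has_vector_derivative[symmetric]
          has_field_derivative_at_within)
  qed (use assms in simp)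
  moreover have "G c - G 0 = 2 * (sqrt (d + a * c) - sqrt d) / a"
    unfolding G_def by (simp add: divide_simps)
  ultimately show ?thesis by simp
qed

lemma eventually_mult_powr_less_powr:
  fixes C a b :: real
  assumes "a < b" "0 < C"
  shows "eventually (\<lambda>R. C * R powr a < R powr b) at_top"
proof -
  have "((\<lambda>R. R powr (a - b)) \<longlongrightarrow> 0) at_top"
    using assms by (intro tendsto_neg_powr filterlim_ident) auto
  then have "eventually (\<lambda>R. R powr (a - b) < 1 / C) at_top"
    using assms by (intro order_tendstoD(2)) auto
  with eventually_gt_at_top[of 0] show ?thesis
  proof eventually_elim
    case (elim R)
    then have "C * R powr (a - b) * R powr b < R powr b"
      using assms by (simp add: field_simps)
    moreover have "R powr (a - b) * R powr b = R powr a" by (simp add: powr_add[symmetric])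
    ultimately show ?case by (simp add: mult.assoc)
  qed
qed

lemma eventually_choice_tendsto_zero:
  fixes B :: "real \<Rightarrow> real"
  assumes "eventually (\<lambda>x. \<exists>y. P x y \<and> 0 \<le> y \<and> y \<le> B x) at_top" and "(B \<longlongrightarrow> 0) at_top"
  obtains x\<^sub>0 and f :: "real \<Rightarrow> real" where "0 < x\<^sub>0" "\<And>x. x > x\<^sub>0 \<Longrightarrow> P x (f x)" "(f \<longlongrightarrow> 0) at_top"
proof -
  obtain x\<^sub>1 where "\<And>x. x \<ge> x\<^sub>1 \<Longrightarrow> \<exists>y. P x y \<and> 0 \<le> y \<and> y \<le> B x"
    using assms(1) by (auto simp: eventually_at_top_linorder)
  then obtain f where f: "\<And>x. x \<ge> x\<^sub>1 \<Longrightarrow> P x (f x) \<and> 0 \<le> f x \<and> f x \<le> B x"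
    by metis
  have "(f \<longlongrightarrow> 0) at_top"
  proof (rule tendsto_sandwich[of "\<lambda>_. 0" f _ B])
    show "eventually (\<lambda>x. 0 \<le> f x) at_top" "eventually (\<lambda>x. f x \<le> B x) at_top"
      using f by (auto simp: eventually_at_top_linorder)
  qed (simp_all add: assms(2))
  then show ?thesis using f by (intro that[of "max x\<^sub>1 1" f]) auto
qed

section \<open>The time map\<close>

definition two_asymmetric_solutions :: "real \<Rightarrow> real \<Rightarrow> real \<Rightarrow> real \<Rightarrow> bool" where
  "two_asymmetric_solutions p lam h R \<longleftrightarrow>
     (\<exists>u v. (\<exists>x\<in>{0..1}. u x \<noteq> v x) \<and>
        is_solution p lam h u \<and> is_positive u \<and> is_asymmetric u \<and> sup_norm01 u = R \<and>
        is_solution p lam h v \<and> is_positive v \<and> is_asymmetric v \<and> sup_norm01 v = R)"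

locale time_map =
  fixes p lam R :: real
  assumes p_gt_1: "p > 1" and lam_pos: "lam > 0" and R_pos: "R > 0"
begin

definition k :: real where "k = 2 / (p + 1)"

text \<open>Along a solution of \<open>- w'' = lam w + w^p\<close> the energy \<open>w'^2 + lam w^2 + k w^(p+1)\<close> is
  constant. \<open>Q c y\<close> is \<open>w'^2\<close> at height \<open>y\<close> on the solution that reaches height \<open>c\<close> with the
  slope \<open>sqrt (lam (R^2 - c^2))\<close> of the cosine of amplitude \<open>R\<close>, so that the two can be glued.\<close>

definition Q :: "real \<Rightarrow> real \<Rightarrow> real" where
  "Q c y = lam * R^2 + k * c powr (p + 1) - lam * y^2 - k * y powr (p + 1)"

text \<open>The clamping to \<open>[0, c]\<close> makes \<open>slowness c\<close> continuous and positive on all of \<open>\<real>\<close>.\<close>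

definition slowness :: "real \<Rightarrow> real \<Rightarrow> real" where
  "slowness c y = 1 / sqrt (Q c (min c (max 0 y)))"

definition tau :: "real \<Rightarrow> real" where
  "tau c = integral {0..c} (slowness c)"

lemma k_pos: "k > 0"
  using p_gt_1 by (simp add: k_def)

lemma gap_pos: "0 \<le> c \<Longrightarrow> c < R \<Longrightarrow> lam * (R^2 - c^2) > 0"
  using lam_pos by (simp add: power_strict_mono)

lemma Q_ge_gap:
  assumes "0 \<le> y" "y \<le> c" "c < R"
  shows "lam * (R^2 - c^2) \<le> Q c y"
proof -
  have "k * y powr (p + 1) \<le> k * c powr (p + 1)"
    using assms p_gt_1 k_pos by (intro mult_left_mono powr_mono2) auto
  moreover have "lam * y^2 \<le> lam * c^2"
    using assms lam_pos by (intro mult_left_mono power_mono) auto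
  ultimately show ?thesis unfolding Q_def by (simp add: algebra_simps)
qed

lemma Q_pos: "0 \<le> y \<Longrightarrow> y \<le> c \<Longrightarrow> c < R \<Longrightarrow> Q c y > 0"
  using Q_ge_gap[of y c] gap_pos[of c] by linarith

lemma Q_le: "0 \<le> y \<Longrightarrow> Q c y \<le> lam * R^2 + k * c powr (p + 1)"
  unfolding Q_def using k_pos lam_pos
  by (smt (verit) mult_nonneg_nonneg powr_ge_zero zero_le_power2)

lemma Q_self: "Q c c = lam * (R^2 - c^2)"
  by (simp add: Q_def algebra_simps)

lemma Q_has_real_derivative:
  assumes "y > 0"
  shows "(Q c has_real_derivative - (2 * lam * y + 2 * y powr p)) (at y)"
proof -
  have "k * (p + 1) = 2" using p_gt_1 by (simp add: k_def divide_simps)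
  then have "lam * (2 * y) + k * ((p + 1) * y powr p) = 2 * lam * y + 2 * y powr p"
    by (metis mult.assoc mult.left_commute)
  then show ?thesis
    unfolding Q_def[abs_def] using assms
    by (auto intro!: derivative_eq_intros simp: has_real_derivative_powr algebra_simps)
qed

lemma continuous_on_slowness_joint:
  assumes "m < R"
  shows "continuous_on ({0..m} \<times> UNIV) (\<lambda>(c, y). slowness c y)"
proof -
  let ?y = "\<lambda>z::real \<times> real. min (fst z) (max 0 (snd z))"
  have "continuous_on ({0..m} \<times> UNIV) (\<lambda>z. Q (fst z) (?y z))"
    unfolding Q_def using p_gt_1 by (intro continuous_on_powr' continuous_intros) auto
  moreover have "Q (fst z) (?y z) \<noteq> 0" if "z \<in> {0..m} \<times> UNIV" for z
    using Q_pos[of "?y z" "fst z"] assms that by auto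
  ultimately have "continuous_on ({0..m} \<times> UNIV) (\<lambda>z. 1 / sqrt (Q (fst z) (?y z)))"
    by (intro continuous_intros) auto
  then show ?thesis by (simp add: slowness_def case_prod_beta)
qed

lemma continuous_on_slowness:
  assumes "0 \<le> c" "c < R"
  shows "continuous_on S (slowness c)"
proof -
  have "continuous_on S (\<lambda>y. (\<lambda>(c, y). slowness c y) (c, y))"
    using assms
    by (intro continuous_on_compose2[OF continuous_on_slowness_joint[of c]] continuous_intros) auto
  then show ?thesis by simp
qed

lemma slowness_pos: "0 \<le> c \<Longrightarrow> c < R \<Longrightarrow> slowness c y > 0"
  unfolding slowness_def using Q_pos[of "min c (max 0 y)" c] by auto

lemma slowness_ge: "0 \<le> c \<Longrightarrow> c < R \<Longrightarrow> 1 / sqrt (lam * R^2 + k * c powr (p + 1)) \<le> slowness c y"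
  unfolding slowness_def using Q_le[of "min c (max 0 y)" c] Q_pos[of "min c (max 0 y)" c]
  by (auto intro!: divide_left_mono mult_pos_pos)

lemma slowness_above: "0 \<le> c \<Longrightarrow> c \<le> y \<Longrightarrow> slowness c y = 1 / sqrt (lam * (R^2 - c^2))"
  unfolding slowness_def using Q_self by auto

lemma slowness_integrable: "0 \<le> c \<Longrightarrow> c < R \<Longrightarrow> slowness c integrable_on {a..b}"
  by (intro integrable_continuous_interval continuous_on_slowness)

lemma tau_nonpos: "c \<le> 0 \<Longrightarrow> tau c = 0"
  unfolding tau_def by (cases "c = 0") auto

text \<open>Writing \<open>tau c\<close> as an integral over a fixed interval makes the continuity of parametric
  integrals applicable.\<close>

lemma tau_eq_integral_minus:
  assumes "0 \<le> c" "c \<le> m" "m < R"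
  shows "tau c = integral {0..m} (slowness c) - (m - c) / sqrt (lam * (R^2 - c^2))"
proof -
  have "integral {0..c} (slowness c) + integral {c..m} (slowness c) = integral {0..m} (slowness c)"
    using assms by (intro Henstock_Kurzweil_Integration.integral_combine slowness_integrable) auto
  moreover have "integral {c..m} (slowness c) = integral {c..m} (\<lambda>y. 1 / sqrt (lam * (R^2 - c^2)))"
    using assms by (intro integral_cong slowness_above) auto
  ultimately show ?thesis using assms unfolding tau_def by simp
qed

lemma continuous_on_tau:
  assumes "m < R"
  shows "continuous_on {..m} tau"
proof -
  have "continuous_on {0..m} (\<lambda>c. integral (cbox 0 m) (slowness c))"
    using continuous_on_subset[OF continuous_on_slowness_joint[OF assms], of "{0..m} \<times> cbox 0 m"]
    by (intro integral_continuous_on_param) auto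
  then have "continuous_on {0..m}
      (\<lambda>c. integral {0..m} (slowness c) - (m - c) / sqrt (lam * (R^2 - c^2)))"
    using assms gap_pos by (intro continuous_intros) force+
  then have cont: "continuous_on {0..m} tau"
    by (rule continuous_on_eq) (use assms tau_eq_integral_minus in auto)
  show ?thesis
  proof (cases "m \<ge> 0")
    case True
    have "continuous_on {..m} (\<lambda>c. tau (max 0 c))"
      by (rule continuous_on_compose2[OF cont]) (use True in \<open>auto intro!: continuous_intros\<close>)
    then show ?thesis
      by (rule continuous_on_eq) (auto simp: tau_nonpos max_def)
  next
    case False
    then show ?thesis
      by (intro continuous_on_eq[OF continuous_on_const[of _ 0]]) (auto simp: tau_nonpos)
  qed
qed

lemma tau_ge:
  assumes "0 \<le> c" "c < R"
  shows "c / sqrt (lam * R^2 + k * c powr (p + 1)) \<le> tau c"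
proof -
  have "integral {0..c} (\<lambda>y. 1 / sqrt (lam * R^2 + k * c powr (p + 1)))
      \<le> integral {0..c} (slowness c)"
    using assms by (intro integral_le slowness_integrable slowness_ge) auto
  then show ?thesis using assms unfolding tau_def by simp
qed

lemma tau_pos:
  assumes "0 < c" "c < R"
  shows "tau c > 0"
proof -
  have "lam * R^2 + k * c powr (p + 1) > 0"
    using lam_pos R_pos k_pos by (simp add: add_pos_nonneg)
  then show ?thesis using tau_ge[of c] assms by (smt (verit) divide_pos_pos real_sqrt_gt_zero)
qed

lemma tau_le:
  assumes c: "0 < c" "c < R"
  shows "tau c \<le> sqrt (2 * (p + 1)) * c powr ((1 - p) / 2)"
proof -
  define d where "d = lam * (R^2 - c^2)"
  define a where "a = k * c powr p"
  have d: "d > 0" unfolding d_def using gap_pos c by auto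
  have a: "a > 0" unfolding a_def using k_pos c by auto
  have "slowness c y \<le> 1 / sqrt (d + a * (c - y))" if "y \<in> {0..c}" for y
  proof -
    have y: "0 \<le> y" "y \<le> c" using that by auto
    have "y powr p * y \<le> c powr p * y" using y p_gt_1 by (intro mult_right_mono powr_mono2) auto
    then have "c powr p * (c - y) \<le> c powr (p + 1) - y powr (p + 1)"
      using y c by (simp add: powr_add algebra_simps)
    then have "a * (c - y) \<le> k * (c powr (p + 1) - y powr (p + 1))"
      unfolding a_def using k_pos by (simp add: mult.assoc mult_left_mono)
    moreover have "lam * y^2 \<le> lam * c^2" using y lam_pos by (intro mult_left_mono power_mono) auto
    ultimately have "d + a * (c - y) \<le> Q c y" unfolding Q_def d_def by (simp add: algebra_simps)
    moreover have "d + a * (c - y) > 0" using y d a by (auto intro: add_pos_nonneg)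
    ultimately show ?thesis
      unfolding slowness_def using y by (auto intro!: divide_left_mono mult_pos_pos)
  qed
  then have "tau c \<le> 2 * (sqrt (d + a * c) - sqrt d) / a"
    unfolding tau_def using c
    by (intro has_integral_le[OF integrable_integral[OF slowness_integrable]
          has_integral_inverse_sqrt_affine[OF a d]]) auto
  also have "\<dots> \<le> 2 * sqrt (a * c) / a"
    using sqrt_add_le_add_sqrt[of d "a * c"] d a c by (intro divide_right_mono) auto
  also have "\<dots> = sqrt (4 * c / a)"
    using a c by (simp add: real_sqrt_divide real_sqrt_mult divide_simps)
  also have "4 * c / a = 2 * (p + 1) * c powr (1 - p)"
    unfolding a_def k_def using c p_gt_1 by (simp add: powr_diff divide_simps)
  also have "sqrt (2 * (p + 1) * c powr (1 - p)) = sqrt (2 * (p + 1)) * c powr ((1 - p) / 2)"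
    using c by (simp add: real_sqrt_mult powr_half_sqrt_powr)
  finally show ?thesis .
qed

definition nonlinear_arc :: "real \<Rightarrow> real \<Rightarrow> (real \<Rightarrow> real) \<Rightarrow> (real \<Rightarrow> real) \<Rightarrow> bool" where
  "nonlinear_arc c L w w' \<longleftrightarrow>
     (\<forall>x\<in>{0..L}. (w has_real_derivative w' x) (at x)) \<and> continuous_on {0..L} w' \<and>
     (\<forall>x\<in>{0<..<L}. (w' has_real_derivative - (lam * w x + w x powr p)) (at x)) \<and>
     w 0 = 0 \<and> w L = c \<and> w' L = sqrt (lam * (R^2 - c^2)) \<and> (\<forall>x\<in>{0<..L}. 0 < w x \<and> w x \<le> c)"

lemma sqrt_Q_has_real_derivative:
  assumes w: "(w has_real_derivative sqrt (Q c (w x))) (at x)" and "0 < w x" "w x < c" "c < R"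
  shows "((\<lambda>y. sqrt (Q c (w y))) has_real_derivative - (lam * w x + w x powr p)) (at x)"
proof -
  have Q_wx: "Q c (w x) > 0" using Q_pos[of "w x" c] assms by auto
  have "((\<lambda>y. Q c (w y)) has_real_derivative
      - (2 * lam * w x + 2 * w x powr p) * sqrt (Q c (w x))) (at x)"
    by (rule DERIV_chain2[where f = "Q c" and g = w, OF Q_has_real_derivative[OF assms(2)] w])
  then have "((\<lambda>y. sqrt (Q c (w y))) has_real_derivative
      inverse (sqrt (Q c (w x))) / 2 * (- (2 * lam * w x + 2 * w x powr p) * sqrt (Q c (w x))))
      (at x)"
    by (rule DERIV_chain2[where f = sqrt and g = "\<lambda>y. Q c (w y)", OF DERIV_real_sqrt[OF Q_wx]])
  moreover have "inverse s / 2 * (- (2 * lam * y + 2 * z) * s) = - (lam * y + z)"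
    if "s \<noteq> 0" for s y z :: real
    using that by (simp add: field_simps)
  then have "inverse (sqrt (Q c (w x))) / 2 *
      (- (2 * lam * w x + 2 * w x powr p) * sqrt (Q c (w x))) = - (lam * w x + w x powr p)"
    using Q_wx by simp
  ultimately show ?thesis by (simp only:)
qed

lemma nonlinear_arc_exists:
  assumes c: "0 < c" "c < R"
  obtains w w' where "nonlinear_arc c (tau c) w w'"
proof -
  obtain w
    where w_deriv: "\<And>x. x \<in> {0..tau c} \<Longrightarrow>
      (w has_real_derivative inverse (slowness c (w x))) (at x)"
    and w_0: "w 0 = 0" and w_tau: "w (tau c) = c" and w_in: "\<And>x. x \<in> {0<..<tau c} \<Longrightarrow> w x \<in> {0<..<c}"
    using inverse_of_primitive[of "slowness c" 0 c] continuous_on_slowness slowness_pos c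
    unfolding tau_def[symmetric] by (metis less_imp_le)
  define w' where "w' x = sqrt (Q c (min c (max 0 (w x))))" for x
  have w_has_deriv: "(w has_real_derivative w' x) (at x)" if "x \<in> {0..tau c}" for x
    using w_deriv[OF that] by (simp add: w'_def slowness_def)
  have w_cont: "continuous_on {0..tau c} w"
    by (intro continuous_at_imp_continuous_on ballI DERIV_isCont[OF w_has_deriv])
  have "continuous_on {0..tau c} (\<lambda>x. Q c (min c (max 0 (w x))))"
    unfolding Q_def using p_gt_1 c
    by (intro continuous_on_powr' continuous_intros w_cont) (auto simp: min_def max_def)
  then have w'_cont: "continuous_on {0..tau c} w'"
    unfolding w'_def by (intro continuous_intros)
  have w'_deriv: "(w' has_real_derivative - (lam * w x + w x powr p)) (at x)"
    if x: "x \<in> {0<..<tau c}" for x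
  proof -
    have wx: "0 < w x" "w x < c" using w_in[OF x] by auto
    have "eventually (\<lambda>y. w y \<in> {0<..<c}) (at x)"
      using w_has_deriv[of x] x wx
      by (intro topological_tendstoD[OF DERIV_isCont[unfolded isCont_def]]) auto
    then have "eventually (\<lambda>y. w y \<in> {0<..<c}) (nhds x)"
      unfolding eventually_nhds_conv_at using wx by auto
    then have near: "eventually (\<lambda>y. sqrt (Q c (w y)) = w' y) (nhds x)"
      by eventually_elim (auto simp: w'_def)
    have "(w has_real_derivative sqrt (Q c (w x))) (at x)"
      using w_has_deriv[of x] x wx by (simp add: w'_def)
    from sqrt_Q_has_real_derivative[OF this wx c(2)] show ?thesis
      using DERIV_cong_ev[OF refl near refl] by simp
  qed
  have w'_tau: "w' (tau c) = sqrt (lam * (R^2 - c^2))"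
    using w_tau c by (simp add: w'_def Q_self)
  have w_pos: "0 < w x \<and> w x \<le> c" if "x \<in> {0<..tau c}" for x
    using w_in[of x] w_tau c that by (cases "x = tau c") auto
  have "nonlinear_arc c (tau c) w w'"
    unfolding nonlinear_arc_def using w_has_deriv w'_cont w'_deriv w_0 w_tau w'_tau w_pos by blast
  then show ?thesis ..
qed

section \<open>Gluing a solution\<close>

lemma R_cos_bounds: "0 < \<alpha> \<Longrightarrow> \<alpha> < pi / 2 \<Longrightarrow> 0 < R * cos \<alpha> \<and> R * cos \<alpha> < R"
  using R_pos cos_gt_zero_pi[of \<alpha>] cos_monotone_0_pi[of 0 \<alpha>] by auto

lemma sqrt_gap_R_cos:
  assumes "0 \<le> \<alpha>" "\<alpha> \<le> pi"
  shows "sqrt (lam * (R^2 - (R * cos \<alpha>)^2)) = sqrt lam * R * sin \<alpha>"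
proof -
  have "R^2 - (R * cos \<alpha>)^2 = (R * sin \<alpha>)^2"
    by (simp add: power_mult_distrib sin_squared_eq algebra_simps)
  moreover have "R * sin \<alpha> \<ge> 0" using assms R_pos by (simp add: sin_ge_zero)
  ultimately show ?thesis by (simp add: real_sqrt_mult)
qed

lemma nonlinear_arc_rhs_bound:
  assumes "nonlinear_arc c L w w'" "c < R" "x \<in> {0<..L}"
  shows "\<bar>- (lam * w x + w x powr p)\<bar> \<le> lam * R + R powr p"
proof -
  have w: "0 < w x" "w x \<le> R" using assms unfolding nonlinear_arc_def by fastforce+
  have "w x powr p \<le> R powr p" using w p_gt_1 by (intro powr_mono2) auto
  moreover have "lam * w x \<le> lam * R" using w lam_pos by simp
  moreover have "0 \<le> lam * w x + w x powr p" using w lam_pos by simp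
  then have "\<bar>- (lam * w x + w x powr p)\<bar> = lam * w x + w x powr p"
    by (simp only: abs_minus_cancel abs_of_nonneg)
  ultimately show ?thesis by linarith
qed

lemma nonlinear_arc_lipschitz:
  assumes arc: "nonlinear_arc c L w w'" and "c < R"
  shows "(lam * R + R powr p)-lipschitz_on {0..L} w'"
proof (rule lipschitz_on_Icc_of_deriv_bound)
  show "continuous_on {0..L} w'"
    "\<And>x. x \<in> {0<..<L} \<Longrightarrow> (w' has_real_derivative - (lam * w x + w x powr p)) (at x)"
    using arc by (simp_all add: nonlinear_arc_def)
  show "\<bar>- (lam * w x + w x powr p)\<bar> \<le> lam * R + R powr p" if "x \<in> {0<..<L}" for x
    using nonlinear_arc_rhs_bound[OF assms, of x] that by simp
qed (use lam_pos R_pos in simp)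

definition linear_arc :: "real \<Rightarrow> real \<Rightarrow> real \<Rightarrow> real" where
  "linear_arc \<alpha> L x = R * cos (sqrt lam * (x - L) - \<alpha>)"

definition linear_arc' :: "real \<Rightarrow> real \<Rightarrow> real \<Rightarrow> real" where
  "linear_arc' \<alpha> L x = - (R * sqrt lam * sin (sqrt lam * (x - L) - \<alpha>))"

lemma linear_arc_has_derivative: "(linear_arc \<alpha> L has_real_derivative linear_arc' \<alpha> L x) (at x)"
  unfolding linear_arc_def[abs_def] linear_arc'_def by (auto intro!: derivative_eq_intros)

lemma linear_arc'_has_derivative:
  "(linear_arc' \<alpha> L has_real_derivative - (lam * linear_arc \<alpha> L x)) (at x)"
proof -
  let ?\<theta> = "sqrt lam * (x - L) - \<alpha>"
  have "(linear_arc' \<alpha> L has_real_derivative - (R * sqrt lam * (cos ?\<theta> * sqrt lam))) (at x)"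
    unfolding linear_arc'_def[abs_def] by (auto intro!: derivative_eq_intros)
  moreover have "R * sqrt lam * (cos ?\<theta> * sqrt lam) = (sqrt lam * sqrt lam) * (R * cos ?\<theta>)"
    by (simp only: mult_ac)
  ultimately show ?thesis using lam_pos by (simp add: linear_arc_def)
qed

lemma abs_linear_arc_le: "\<bar>linear_arc \<alpha> L x\<bar> \<le> R"
  using R_pos by (simp add: linear_arc_def abs_mult mult_left_le)

definition glued :: "real \<Rightarrow> real \<Rightarrow> (real \<Rightarrow> real) \<Rightarrow> (real \<Rightarrow> real) \<Rightarrow> real \<Rightarrow> real" where
  "glued \<alpha> L w1 w2 = splice L (1 - L) w1 (linear_arc \<alpha> L) (\<lambda>x. w2 (1 - x))"

definition glued' :: "real \<Rightarrow> real \<Rightarrow> (real \<Rightarrow> real) \<Rightarrow> (real \<Rightarrow> real) \<Rightarrow> real \<Rightarrow> real" where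
  "glued' \<alpha> L w1' w2' = splice L (1 - L) w1' (linear_arc' \<alpha> L) (\<lambda>x. - w2' (1 - x))"

context
  fixes \<alpha> \<beta> L :: real and w1 w1' w2 w2' :: "real \<Rightarrow> real"
  assumes \<alpha>: "0 < \<alpha>" "\<alpha> < pi / 2" and \<beta>: "0 < \<beta>" "\<beta> < pi / 2" and L: "0 < L" "L < 1 / 2"
    and arc1: "nonlinear_arc (R * cos \<alpha>) L w1 w1'" and arc2: "nonlinear_arc (R * cos \<beta>) L w2 w2'"
    and angles: "\<alpha> + \<beta> = sqrt lam * (1 - 2 * L)"
begin

lemma linear_arc_at_knots:
  "linear_arc \<alpha> L L = w1 L" "linear_arc' \<alpha> L L = w1' L"
  "linear_arc \<alpha> L (1 - L) = w2 L" "linear_arc' \<alpha> L (1 - L) = - w2' L"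
proof -
  have phase: "sqrt lam * (1 - 2 * L) - \<alpha> = \<beta>" using angles by simp
  show "linear_arc \<alpha> L L = w1 L" "linear_arc' \<alpha> L L = w1' L"
    using arc1 sqrt_gap_R_cos[of \<alpha>] \<alpha>
    by (simp_all add: nonlinear_arc_def linear_arc_def linear_arc'_def)
  show "linear_arc \<alpha> L (1 - L) = w2 L" "linear_arc' \<alpha> L (1 - L) = - w2' L"
    using arc2 sqrt_gap_R_cos[of \<beta>] \<beta>
    by (simp_all add: nonlinear_arc_def linear_arc_def linear_arc'_def phase)
qed

lemma glued_has_derivative:
  assumes "x \<in> {0..1}"
  shows "(glued \<alpha> L w1 w2 has_real_derivative glued' \<alpha> L w1' w2' x) (at x)"
  unfolding glued_def glued'_def
proof (rule has_real_derivative_splice[where a = 0 and b = 1])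
  show "(w1 has_real_derivative w1' y) (at y)" if "y \<in> {0..L}" for y
    using arc1 that by (simp add: nonlinear_arc_def)
  show "((\<lambda>x. w2 (1 - x)) has_real_derivative - w2' (1 - y)) (at y)" if "y \<in> {1 - L..1}" for y
    using arc2 that by (intro has_real_derivative_reflect) (simp add: nonlinear_arc_def)
qed (use assms L linear_arc_has_derivative linear_arc_at_knots in auto)

lemma glued'_lipschitz: "(lam * R + R powr p)-lipschitz_on {0..1} (glued' \<alpha> L w1' w2')"
  unfolding glued'_def
proof (rule lipschitz_on_splice)
  show "(lam * R + R powr p)-lipschitz_on {0..L} w1'"
    using nonlinear_arc_lipschitz[OF arc1] R_cos_bounds[OF \<alpha>] by blast
  show "(lam * R + R powr p)-lipschitz_on {1 - L..1} (\<lambda>x. - w2' (1 - x))"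
    using lipschitz_on_reflect[OF nonlinear_arc_lipschitz[OF arc2]] R_cos_bounds[OF \<beta>] by blast
  show "(lam * R + R powr p)-lipschitz_on {L..1 - L} (linear_arc' \<alpha> L)"
  proof (rule lipschitz_on_Icc_of_deriv_bound[OF _ linear_arc'_has_derivative])
    show "continuous_on {L..1 - L} (linear_arc' \<alpha> L)"
      by (intro continuous_at_imp_continuous_on ballI DERIV_isCont[OF linear_arc'_has_derivative])
    have "lam * \<bar>linear_arc \<alpha> L x\<bar> \<le> lam * R" for x
      using abs_linear_arc_le lam_pos by (simp add: mult_left_mono)
    then show "\<bar>- (lam * linear_arc \<alpha> L x)\<bar> \<le> lam * R + R powr p" for x
      using lam_pos by (simp add: abs_mult add_increasing2)
  qed (use lam_pos R_pos in simp)
  show "linear_arc' \<alpha> L (1 - L) = - w2' (1 - (1 - L))" "w1' L = linear_arc' \<alpha> L L"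
    using linear_arc_at_knots by simp_all
qed (use L in simp)

lemma glued'_has_derivative:
  assumes "x \<in> {0<..<1}" "x \<noteq> L" "x \<noteq> 1 - L"
  shows "(glued' \<alpha> L w1' w2' has_real_derivative
           - (lam * glued \<alpha> L w1 w2 x + a_h (1 - 2 * L) x * glued \<alpha> L w1 w2 x powr p)) (at x)"
proof -
  let ?F = "\<lambda>x. - (lam * w1 x + w1 x powr p)"
  let ?G = "\<lambda>x. - (lam * linear_arc \<alpha> L x)"
  let ?H = "\<lambda>x. - (lam * w2 (1 - x) + w2 (1 - x) powr p)"
  have "(glued' \<alpha> L w1' w2' has_real_derivative splice L (1 - L) ?F ?G ?H x) (at x)"
    unfolding glued'_def
  proof (rule has_real_derivative_splice_off_knots[where a = 0 and b = 1])
    show "(w1' has_real_derivative ?F y) (at y)" if "y \<in> {0<..<L}" for y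
      using arc1 that by (simp add: nonlinear_arc_def)
    show "((\<lambda>x. - w2' (1 - x)) has_real_derivative ?H y) (at y)" if "y \<in> {1 - L<..<1}" for y
      using arc2 that DERIV_minus[OF has_real_derivative_reflect[of w2' _ y]]
      by (simp add: nonlinear_arc_def)
  qed (use assms L linear_arc'_has_derivative in auto)
  moreover have "a_h (1 - 2 * L) x = (if L < x \<and> x < 1 - L then 0 else 1)"
    by (simp add: a_h_def field_simps)
  ultimately show ?thesis using assms L by (auto simp: splice_def glued_def)
qed

lemma glued_is_solution: "is_solution p lam (1 - 2 * L) (glued \<alpha> L w1 w2)"
  unfolding is_solution_def
proof (intro conjI exI[of _ "glued' \<alpha> L w1' w2'"])
  show "\<forall>x\<in>{0..1}. (glued \<alpha> L w1 w2 has_real_derivative glued' \<alpha> L w1' w2' x) (at x within {0..1})"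
    using glued_has_derivative by (auto intro: has_field_derivative_at_within)
  show "continuous_on {0..1} (glued' \<alpha> L w1' w2')"
    by (rule lipschitz_on_continuous_on[OF glued'_lipschitz])
  show "abs_cont_on (glued' \<alpha> L w1' w2') 0 1"
    by (rule lipschitz_on_imp_abs_cont_on[OF glued'_lipschitz])
  have "{L, 1 - L} \<in> null_sets lebesgue"
    by (intro null_sets_completionI finite_imp_null_set_lborel) auto
  then have "AE x in lebesgue. x \<notin> {L, 1 - L}"
    by (rule AE_I') auto
  then show "AE x in lebesgue. x \<in> {0<..<1} \<longrightarrow> (glued' \<alpha> L w1' w2' has_real_derivative
      - (lam * glued \<alpha> L w1 w2 x + a_h (1 - 2 * L) x * glued \<alpha> L w1 w2 x powr p)) (at x)"
    by eventually_elim (use glued'_has_derivative in blast)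
  show "glued \<alpha> L w1 w2 0 = 0" "glued \<alpha> L w1 w2 1 = 0"
    using arc1 arc2 L by (auto simp: glued_def splice_def nonlinear_arc_def)
qed

lemma glued_at_knots: "glued \<alpha> L w1 w2 L = R * cos \<alpha>" "glued \<alpha> L w1 w2 (1 - L) = R * cos \<beta>"
  using linear_arc_at_knots arc1 arc2 L by (simp_all add: glued_def splice_def nonlinear_arc_def)

lemma glued_positive: "is_positive (glued \<alpha> L w1 w2)"
  unfolding is_positive_def
proof
  fix x :: real assume x: "x \<in> {0<..<1}"
  consider "x \<le> L" | "L < x" "x \<le> 1 - L" | "1 - L < x" by linarith
  then show "glued \<alpha> L w1 w2 x > 0"
  proof cases
    case 1
    then show ?thesis using arc1 x by (auto simp: glued_def splice_def nonlinear_arc_def)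
  next
    case 2
    have "sqrt lam * (x - L) \<le> sqrt lam * (1 - 2 * L)"
      using 2 lam_pos by (intro mult_left_mono) auto
    moreover have "0 < sqrt lam * (x - L)" using 2 lam_pos by simp
    ultimately have "- (pi / 2) < sqrt lam * (x - L) - \<alpha>" "sqrt lam * (x - L) - \<alpha> < pi / 2"
      using \<alpha> \<beta> angles by linarith+
    then have "linear_arc \<alpha> L x > 0"
      unfolding linear_arc_def using R_pos by (simp add: cos_gt_zero_pi)
    then show ?thesis using 2 by (simp add: glued_def splice_def)
  next
    case 3
    then have "1 - x \<in> {0<..L}" using x by auto
    then show ?thesis using arc2 3 L by (auto simp: glued_def splice_def nonlinear_arc_def)
  qed
qed

lemma glued_sup_norm: "sup_norm01 (glued \<alpha> L w1 w2) = R"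
  unfolding sup_norm01_def
proof (rule cSup_eq_maximum)
  define x\<^sub>0 where "x\<^sub>0 = L + \<alpha> / sqrt lam"
  have "\<alpha> / sqrt lam \<le> 1 - 2 * L"
    using angles \<beta> lam_pos by (simp add: divide_simps mult.commute)
  moreover have "0 < \<alpha> / sqrt lam" using \<alpha> lam_pos by simp
  ultimately have "L < x\<^sub>0" "x\<^sub>0 \<le> 1 - L" by (auto simp: x\<^sub>0_def)
  moreover have "linear_arc \<alpha> L x\<^sub>0 = R"
    using lam_pos by (simp add: linear_arc_def x\<^sub>0_def)
  ultimately show "R \<in> (\<lambda>x. \<bar>glued \<alpha> L w1 w2 x\<bar>) ` {0..1}"
    using L R_pos by (intro image_eqI[of _ _ x\<^sub>0]) (auto simp: glued_def splice_def)
next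
  fix y assume "y \<in> (\<lambda>x. \<bar>glued \<alpha> L w1 w2 x\<bar>) ` {0..1}"
  then obtain x where x: "x \<in> {0..1}" "y = \<bar>glued \<alpha> L w1 w2 x\<bar>" by auto
  have bound: "\<bar>w x\<bar> \<le> R" if "nonlinear_arc c L w w'" "c < R" "x \<in> {0..L}" for c w w' x
  proof (cases "x = 0")
    case False
    then have "0 < w x" "w x \<le> c" using that by (auto simp: nonlinear_arc_def)
    then show ?thesis using that by simp
  qed (use that R_pos in \<open>simp add: nonlinear_arc_def\<close>)
  consider "x \<le> L" | "L < x" "x \<le> 1 - L" | "1 - L < x" by linarith
  then show "y \<le> R"
  proof cases
    case 1
    then show ?thesis using bound[OF arc1] R_cos_bounds[OF \<alpha>] x by (simp add: glued_def splice_def)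
  next
    case 2
    then show ?thesis using abs_linear_arc_le x by (simp add: glued_def splice_def)
  next
    case 3
    then show ?thesis using bound[OF arc2, of "1 - x"] R_cos_bounds[OF \<beta>] x L
      by (simp add: glued_def splice_def)
  qed
qed

end

lemma two_asymmetric_solutions_of_angles:
  assumes \<alpha>: "0 < \<alpha>" "\<alpha> < pi / 2" and \<beta>: "0 < \<beta>" "\<beta> < pi / 2" and "\<alpha> \<noteq> \<beta>"
    and L: "0 < L" "L < 1 / 2" and "tau (R * cos \<alpha>) = L" "tau (R * cos \<beta>) = L"
    and angles: "\<alpha> + \<beta> = sqrt lam * (1 - 2 * L)"
  shows "two_asymmetric_solutions p lam (1 - 2 * L) R"
proof -
  obtain w1 w1' where arc1: "nonlinear_arc (R * cos \<alpha>) L w1 w1'"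
    using nonlinear_arc_exists R_cos_bounds[OF \<alpha>] assms by metis
  obtain w2 w2' where arc2: "nonlinear_arc (R * cos \<beta>) L w2 w2'"
    using nonlinear_arc_exists R_cos_bounds[OF \<beta>] assms by metis
  have angles': "\<beta> + \<alpha> = sqrt lam * (1 - 2 * L)" using angles by simp
  note u = glued_is_solution[OF \<alpha> \<beta> L arc1 arc2 angles] glued_positive[OF \<alpha> \<beta> L arc1 arc2 angles]
    glued_sup_norm[OF \<alpha> \<beta> L arc1 arc2 angles] glued_at_knots[OF \<alpha> \<beta> L arc1 arc2 angles]
  note v = glued_is_solution[OF \<beta> \<alpha> L arc2 arc1 angles'] glued_positive[OF \<beta> \<alpha> L arc2 arc1 angles']
    glued_sup_norm[OF \<beta> \<alpha> L arc2 arc1 angles'] glued_at_knots[OF \<beta> \<alpha> L arc2 arc1 angles']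
  have "cos \<alpha> \<noteq> cos \<beta>"
    using cos_inj_pi[of \<alpha> \<beta>] \<alpha> \<beta> \<open>\<alpha> \<noteq> \<beta>\<close> by auto
  then have "R * cos \<alpha> \<noteq> R * cos \<beta>" using R_pos by simp
  moreover have "L \<in> {0..1}" "1 - L \<in> {0..1}" using L by auto
  ultimately show ?thesis
    unfolding two_asymmetric_solutions_def is_asymmetric_def using u v
    by (metis diff_diff_cancel)
qed

end

section \<open>Matching angles\<close>

definition angle_lo :: "real \<Rightarrow> real" where "angle_lo lam = (2 * sqrt lam - pi) / 4"

definition angle_hi :: "real \<Rightarrow> real" where "angle_hi lam = (3 * sqrt lam - pi) / 4"

definition time_bound :: "real \<Rightarrow> real \<Rightarrow> real \<Rightarrow> real" where
  "time_bound p lam R = sqrt (2 * (p + 1)) * (R * cos (angle_hi lam)) powr ((1 - p) / 2)"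

context time_map
begin

lemma tau_R_cos_le:
  assumes "0 < \<alpha>" "\<alpha> \<le> \<gamma>" "\<gamma> < pi / 2"
  shows "tau (R * cos \<alpha>) \<le> sqrt (2 * (p + 1)) * (R * cos \<gamma>) powr ((1 - p) / 2)"
proof -
  have c: "0 < R * cos \<alpha>" "R * cos \<alpha> < R" using R_cos_bounds assms by auto
  have "R * cos \<gamma> \<le> R * cos \<alpha>"
    using assms R_pos by (intro mult_left_mono cos_monotone_0_pi_le) auto
  moreover have "0 < R * cos \<gamma>" using R_cos_bounds[of \<gamma>] assms by auto
  ultimately have "(R * cos \<alpha>) powr ((1 - p) / 2) \<le> (R * cos \<gamma>) powr ((1 - p) / 2)"
    using p_gt_1 by (intro powr_mono2') auto
  then have "sqrt (2 * (p + 1)) * (R * cos \<alpha>) powr ((1 - p) / 2)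
      \<le> sqrt (2 * (p + 1)) * (R * cos \<gamma>) powr ((1 - p) / 2)"
    by (rule mult_left_mono) (use p_gt_1 in simp)
  with tau_le[OF c] show ?thesis by linarith
qed

lemma continuous_on_tau_R_cos:
  fixes g :: "real \<Rightarrow> real"
  assumes "continuous_on S g" "0 < \<delta>" "\<delta> < pi" "\<And>x. x \<in> S \<Longrightarrow> \<delta> \<le> g x \<and> g x \<le> pi"
  shows "continuous_on S (\<lambda>x. tau (R * cos (g x)))"
proof (rule continuous_on_compose2[OF continuous_on_tau[of "R * cos \<delta>"]])
  show "R * cos \<delta> < R" using cos_monotone_0_pi[of 0 \<delta>] assms R_pos by simp
  show "continuous_on S (\<lambda>x. R * cos (g x))"
    by (intro continuous_intros assms(1))
  have "cos (g x) \<le> cos \<delta>" if "x \<in> S" for x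
    using assms(2) assms(4)[OF that] by (intro cos_monotone_0_pi_le) auto
  then show "(\<lambda>x. R * cos (g x)) ` S \<subseteq> {..R * cos \<delta>}"
    using R_pos by (auto intro: mult_left_mono)
qed

lemma tau_powr_ge:
  assumes "R powr (2 / (p + 1)) < R"
  shows "R powr (2 / (p + 1)) / (R * sqrt (lam + 2 / (p + 1))) \<le> tau (R powr (2 / (p + 1)))"
proof -
  have "2 / (p + 1) * (p + 1) = 2" using p_gt_1 by (simp add: divide_simps)
  then have "(R powr (2 / (p + 1))) powr (p + 1) = R^2"
    using R_pos by (simp add: powr_powr powr_numeral)
  then have "lam * R^2 + k * (R powr (2 / (p + 1))) powr (p + 1) = R^2 * (lam + 2 / (p + 1))"
    by (simp add: k_def algebra_simps)
  moreover have "0 \<le> lam + 2 / (p + 1)" using lam_pos p_gt_1 by simp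
  ultimately have "sqrt (lam * R^2 + k * (R powr (2 / (p + 1))) powr (p + 1))
      = R * sqrt (lam + 2 / (p + 1))"
    using R_pos by (simp add: real_sqrt_mult)
  then show ?thesis using tau_ge[of "R powr (2 / (p + 1))"] assms by simp
qed

lemma phase_lt_pi_half_if_tau_pos:
  assumes "0 < \<beta>" "\<beta> < pi" "0 < tau (R * cos \<beta>)"
  shows "\<beta> < pi / 2"
proof (rule ccontr)
  assume "\<not> \<beta> < pi / 2"
  then have "cos \<beta> \<le> cos (pi / 2)" using assms by (intro cos_monotone_0_pi_le) auto
  then have "R * cos \<beta> \<le> 0" using R_pos by (simp add: mult_nonneg_nonpos)
  then show False using tau_nonpos assms(3) by simp
qed

lemma matching_angle_exists:
  fixes \<phi> :: "real \<Rightarrow> real"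
  assumes a: "0 < a\<^sub>0" "a\<^sub>0 < a\<^sub>1" "a\<^sub>1 < pi / 2"
    and \<phi>_cont: "continuous_on {a\<^sub>0..a\<^sub>1} \<phi>"
    and \<phi>_range: "\<And>\<alpha>. \<alpha> \<in> {a\<^sub>0..a\<^sub>1} \<Longrightarrow> \<delta> \<le> \<phi> \<alpha> \<and> \<phi> \<alpha> < pi" and \<delta>: "0 < \<delta>" "\<delta> < pi"
    and \<phi>_a\<^sub>0: "pi / 2 \<le> \<phi> a\<^sub>0" and c: "0 < c" "c \<le> R * cos (\<phi> a\<^sub>1)"
    and time: "\<And>\<alpha>. \<alpha> \<in> {a\<^sub>0..a\<^sub>1} \<Longrightarrow> tau (R * cos \<alpha>) < tau c"
  obtains \<alpha> where "\<alpha> \<in> {a\<^sub>0..a\<^sub>1}" "tau (R * cos (\<phi> \<alpha>)) = tau (R * cos \<alpha>)"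
proof -
  let ?G = "\<lambda>\<alpha>. tau (R * cos (\<phi> \<alpha>)) - tau (R * cos \<alpha>)"
  have "continuous_on {a\<^sub>0..a\<^sub>1} (\<lambda>\<alpha>. tau (R * cos (\<phi> \<alpha>)))"
    by (rule continuous_on_tau_R_cos[OF \<phi>_cont \<delta>]) (use \<phi>_range in fastforce)
  moreover have "continuous_on {a\<^sub>0..a\<^sub>1} (\<lambda>\<alpha>. tau (R * cos \<alpha>))"
    using a by (intro continuous_on_tau_R_cos[where \<delta> = a\<^sub>0] continuous_on_id) auto
  ultimately have G_cont: "continuous_on {a\<^sub>0..a\<^sub>1} ?G"
    by (rule continuous_on_diff)
  have "cos (\<phi> a\<^sub>0) \<le> cos (pi / 2)"
    using \<phi>_range[of a\<^sub>0] \<phi>_a\<^sub>0 a by (intro cos_monotone_0_pi_le) auto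
  then have R_cos_a\<^sub>0: "R * cos (\<phi> a\<^sub>0) \<le> 0" using R_pos by (simp add: mult_nonneg_nonpos)
  then have G_a\<^sub>0: "?G a\<^sub>0 \<le> 0"
    using tau_nonpos tau_pos[of "R * cos a\<^sub>0"] R_cos_bounds[of a\<^sub>0] a by simp
  have "continuous_on {a\<^sub>0..a\<^sub>1} (\<lambda>\<alpha>. R * cos (\<phi> \<alpha>))"
    by (intro continuous_intros \<phi>_cont)
  then obtain a\<^sub>2 where a\<^sub>2: "a\<^sub>0 \<le> a\<^sub>2" "a\<^sub>2 \<le> a\<^sub>1" "R * cos (\<phi> a\<^sub>2) = c"
    using IVT'[of "\<lambda>\<alpha>. R * cos (\<phi> \<alpha>)" a\<^sub>0 c a\<^sub>1] R_cos_a\<^sub>0 c a by auto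
  then have "0 \<le> ?G a\<^sub>2" using time[of a\<^sub>2] by auto
  then obtain \<alpha> where "a\<^sub>0 \<le> \<alpha>" "\<alpha> \<le> a\<^sub>2" "?G \<alpha> = 0"
    using IVT'[of ?G a\<^sub>0 0 a\<^sub>2] G_a\<^sub>0 a\<^sub>2 continuous_on_subset[OF G_cont, of "{a\<^sub>0..a\<^sub>2}"] by auto
  then show ?thesis using that[of \<alpha>] a\<^sub>2(2) by auto
qed

text \<open>A left arc reaching \<open>R cos \<alpha>\<close> uses the time \<open>tau (R cos \<alpha>)\<close>; the cosine then runs through
  the phase \<open>sqrt lam (1 - 2 tau (R cos \<alpha>))\<close>, which leaves \<open>complementary_angle \<alpha>\<close> for the
  right arc.\<close>

definition complementary_angle :: "real \<Rightarrow> real" where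
  "complementary_angle \<alpha> = sqrt lam * (1 - 2 * tau (R * cos \<alpha>)) - \<alpha>"

context
  assumes \<omega>: "pi / 2 < sqrt lam" "sqrt lam < pi"
    and small: "8 * sqrt lam * time_bound p lam R \<le> 2 * sqrt lam - pi"
      "8 * sqrt lam * time_bound p lam R \<le> pi - sqrt lam"
begin

lemma angle_bounds:
  "0 < angle_lo lam" "angle_lo lam < angle_hi lam" "angle_hi lam < pi / 2"
  "2 * angle_lo lam \<le> sqrt lam - angle_hi lam"
  using \<omega> lam_pos by (simp_all add: angle_lo_def angle_hi_def field_simps)

lemma time_bound_small:
  "2 * sqrt lam * time_bound p lam R \<le> angle_lo lam"
  "2 * sqrt lam * time_bound p lam R \<le> (pi - sqrt lam) / 4"
  using small by (simp_all add: angle_lo_def)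

lemma tau_R_cos_le_time_bound:
  assumes "\<alpha> \<in> {angle_lo lam..angle_hi lam}"
  shows "0 < tau (R * cos \<alpha>)" "tau (R * cos \<alpha>) \<le> time_bound p lam R"
    "0 < 2 * sqrt lam * tau (R * cos \<alpha>)" "2 * sqrt lam * tau (R * cos \<alpha>) \<le> angle_lo lam"
proof -
  show pos: "0 < tau (R * cos \<alpha>)"
    using assms angle_bounds tau_pos R_cos_bounds[of \<alpha>] by auto
  show le: "tau (R * cos \<alpha>) \<le> time_bound p lam R"
    using assms angle_bounds tau_R_cos_le[of \<alpha> "angle_hi lam"] unfolding time_bound_def by auto
  show "0 < 2 * sqrt lam * tau (R * cos \<alpha>)" using pos lam_pos by simp
  have "2 * sqrt lam * tau (R * cos \<alpha>) \<le> 2 * sqrt lam * time_bound p lam R"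
    using le lam_pos by (intro mult_left_mono) auto
  then show "2 * sqrt lam * tau (R * cos \<alpha>) \<le> angle_lo lam"
    using time_bound_small(1) by linarith
qed

lemma complementary_angle_eq:
  "complementary_angle \<alpha> = sqrt lam - 2 * sqrt lam * tau (R * cos \<alpha>) - \<alpha>"
  by (simp add: complementary_angle_def algebra_simps)

lemma complementary_angle_bounds:
  assumes "\<alpha> \<in> {angle_lo lam..angle_hi lam}"
  shows "(sqrt lam - angle_hi lam) / 2 \<le> complementary_angle \<alpha> \<and> complementary_angle \<alpha> < pi"
  using tau_R_cos_le_time_bound[OF assms] assms angle_bounds \<omega>
  unfolding complementary_angle_eq by auto

lemma complementary_angle_lo: "pi / 2 \<le> complementary_angle (angle_lo lam)"
proof -
  have "2 * angle_lo lam = sqrt lam - pi / 2" by (simp add: angle_lo_def)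
  then show ?thesis
    using tau_R_cos_le_time_bound(4)[of "angle_lo lam"] angle_bounds
    unfolding complementary_angle_eq by auto
qed

lemma complementary_angle_hi: "complementary_angle (angle_hi lam) \<le> sqrt lam - angle_hi lam"
  using tau_R_cos_le_time_bound[of "angle_hi lam"] angle_bounds
  unfolding complementary_angle_eq by auto

lemma continuous_on_complementary_angle:
  "continuous_on {angle_lo lam..angle_hi lam} complementary_angle"
proof -
  have "continuous_on {angle_lo lam..angle_hi lam} (\<lambda>\<alpha>. tau (R * cos \<alpha>))"
    using angle_bounds
    by (intro continuous_on_tau_R_cos[where \<delta> = "angle_lo lam"] continuous_on_id) auto
  then show ?thesis unfolding complementary_angle_def by (intro continuous_intros)
qed

text \<open>The height \<open>c\<close>, whose rise time exceeds every left rise time, forces the sign change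
  for the intermediate value theorem.\<close>

lemma angles_exist:
  assumes c: "0 < c" "c \<le> R * cos (sqrt lam - angle_hi lam)" "time_bound p lam R < tau c"
  obtains \<alpha> \<beta> L where "0 < \<alpha>" "\<alpha> < pi / 2" "0 < \<beta>" "\<beta> < pi / 2" "\<alpha> \<noteq> \<beta>" "0 < L"
    "L \<le> time_bound p lam R" "L < 1 / 2" "tau (R * cos \<alpha>) = L" "tau (R * cos \<beta>) = L"
    "\<alpha> + \<beta> = sqrt lam * (1 - 2 * L)"
proof -
  have "cos (sqrt lam - angle_hi lam) \<le> cos (complementary_angle (angle_hi lam))"
    using complementary_angle_hi complementary_angle_bounds[of "angle_hi lam"] angle_bounds \<omega>
    by (intro cos_monotone_0_pi_le) auto
  then have c_le: "c \<le> R * cos (complementary_angle (angle_hi lam))"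
    using c R_pos by (meson mult_left_mono order_trans less_imp_le)
  have \<delta>: "0 < (sqrt lam - angle_hi lam) / 2" "(sqrt lam - angle_hi lam) / 2 < pi"
    using angle_bounds \<omega> by auto
  have time: "tau (R * cos \<alpha>) < tau c" if "\<alpha> \<in> {angle_lo lam..angle_hi lam}" for \<alpha>
    using tau_R_cos_le_time_bound(2)[OF that] c(3) by linarith
  obtain \<alpha> where \<alpha>: "\<alpha> \<in> {angle_lo lam..angle_hi lam}"
    and match: "tau (R * cos (complementary_angle \<alpha>)) = tau (R * cos \<alpha>)"
    using matching_angle_exists[OF angle_bounds(1-3) continuous_on_complementary_angle
        complementary_angle_bounds \<delta> complementary_angle_lo c(1) c_le time] by blast
  define \<beta> where "\<beta> = complementary_angle \<alpha>"
  define L where "L = tau (R * cos \<alpha>)"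
  have L: "0 < L" "L \<le> time_bound p lam R" using tau_R_cos_le_time_bound[OF \<alpha>] by (auto simp: L_def)
  have \<beta>_time: "tau (R * cos \<beta>) = L" using match by (simp add: \<beta>_def L_def)
  have "0 < \<beta>" "\<beta> < pi" using complementary_angle_bounds[OF \<alpha>] \<delta> by (auto simp: \<beta>_def)
  then have "\<beta> < pi / 2" using phase_lt_pi_half_if_tau_pos \<beta>_time L by simp
  have sum: "\<alpha> + \<beta> = sqrt lam * (1 - 2 * L)" by (simp add: \<beta>_def complementary_angle_def L_def)
  have "2 * sqrt lam * L \<le> 2 * sqrt lam * time_bound p lam R" using L lam_pos by simp
  then have "2 * sqrt lam * L \<le> (pi - sqrt lam) / 4" using time_bound_small(2) by linarith
  moreover have "sqrt lam * (1 - 2 * L) = sqrt lam - 2 * sqrt lam * L" by (simp add: algebra_simps)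
  ultimately have "2 * \<alpha> < sqrt lam * (1 - 2 * L)" using \<alpha> \<omega> unfolding angle_hi_def by auto
  then have "\<alpha> \<noteq> \<beta>" using sum by auto
  have "L < 1 / 2"
  proof (rule ccontr)
    assume "\<not> L < 1 / 2"
    then have "2 * sqrt lam * (1 / 2) \<le> 2 * sqrt lam * L"
      using lam_pos by (intro mult_left_mono) auto
    then show False
      using tau_R_cos_le_time_bound(4)[OF \<alpha>] \<omega> pi_gt_zero unfolding L_def angle_lo_def by simp
  qed
  show ?thesis
    using \<alpha> angle_bounds \<open>0 < \<beta>\<close> \<open>\<beta> < pi / 2\<close> \<open>\<alpha> \<noteq> \<beta>\<close> L \<open>L < 1 / 2\<close> \<beta>_time sum
    by (intro that[of \<alpha> \<beta> L]) (auto simp: L_def)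
qed

lemma two_asymmetric_solutions_exist:
  assumes height: "R powr (2 / (p + 1)) \<le> R * cos (sqrt lam - angle_hi lam)"
    and time: "time_bound p lam R < R powr (2 / (p + 1)) / (R * sqrt (lam + 2 / (p + 1)))"
  shows "\<exists>L. 0 < L \<and> L < 1 / 2 \<and> L \<le> time_bound p lam R \<and>
           two_asymmetric_solutions p lam (1 - 2 * L) R"
proof -
  have "0 < sqrt lam - angle_hi lam" "sqrt lam - angle_hi lam < pi / 2"
    using \<omega> by (simp_all add: angle_hi_def field_simps)
  then have "R powr (2 / (p + 1)) < R"
    using R_cos_bounds[of "sqrt lam - angle_hi lam"] height by simp
  then have "time_bound p lam R < tau (R powr (2 / (p + 1)))"
    using time tau_powr_ge by (meson less_le_trans)
  moreover have "0 < R powr (2 / (p + 1))" using R_pos by simp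
  ultimately obtain \<alpha> \<beta> L where "0 < \<alpha>" "\<alpha> < pi / 2" "0 < \<beta>" "\<beta> < pi / 2" "\<alpha> \<noteq> \<beta>" "0 < L"
    "L \<le> time_bound p lam R" "L < 1 / 2" "tau (R * cos \<alpha>) = L" "tau (R * cos \<beta>) = L"
    "\<alpha> + \<beta> = sqrt lam * (1 - 2 * L)"
    using angles_exist height by metis
  then show ?thesis using two_asymmetric_solutions_of_angles by blast
qed

end

end

section \<open>Large amplitudes\<close>

lemma tendsto_time_bound:
  assumes "p > 1"
  shows "((\<lambda>R. time_bound p lam R) \<longlongrightarrow> 0) at_top"
proof -
  define K where "K = sqrt (2 * (p + 1)) * cos (angle_hi lam) powr ((1 - p) / 2)"
  have eq: "(\<lambda>R. time_bound p lam R) = (\<lambda>R. K * R powr ((1 - p) / 2))"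
    by (simp add: fun_eq_iff time_bound_def K_def powr_mult mult_ac)
  have "((\<lambda>R. K * R powr ((1 - p) / 2)) \<longlongrightarrow> K * 0) at_top"
    using assms by (intro tendsto_intros tendsto_neg_powr filterlim_ident) auto
  then show ?thesis unfolding eq by simp
qed

lemma eventually_time_bound_less:
  assumes p: "p > 1" and "0 < lam" "0 < cos (angle_hi lam)"
  shows "eventually (\<lambda>R. time_bound p lam R < R powr (2 / (p + 1)) / (R * sqrt (lam + 2 / (p + 1))))
           at_top"
proof -
  define e where "e = (1 - p) / 2"
  define \<theta> where "\<theta> = 2 / (p + 1)"
  define K where "K = sqrt (2 * (p + 1)) * cos (angle_hi lam) powr e"
  have K: "0 < K" using assms by (simp add: K_def)
  have sqrt_pos: "0 < sqrt (lam + \<theta>)" using assms by (simp add: \<theta>_def add_pos_pos)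
  have "\<theta> - 1 - e = (p - 1)^2 / (2 * (p + 1))"
    using p by (simp add: \<theta>_def e_def field_simps power2_eq_square)
  moreover have "0 < (p - 1)^2 / (2 * (p + 1))" using p by simp
  ultimately have "e < \<theta> - 1" by linarith
  then have "eventually (\<lambda>R. K * sqrt (lam + \<theta>) * R powr e < R powr (\<theta> - 1)) at_top"
    using K sqrt_pos by (intro eventually_mult_powr_less_powr) auto
  with eventually_gt_at_top[of 0] show ?thesis
  proof eventually_elim
    case (elim R)
    have "time_bound p lam R = K * R powr e"
      by (simp add: time_bound_def K_def e_def powr_mult mult_ac)
    also have "\<dots> < R powr (\<theta> - 1) / sqrt (lam + \<theta>)"
      using elim(2) by (simp add: pos_less_divide_eq[OF sqrt_pos] mult_ac)
    also have "\<dots> = R powr \<theta> / (R * sqrt (lam + \<theta>))"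
      using elim(1) by (simp add: powr_diff)
    finally show ?case by (simp add: \<theta>_def)
  qed
qed

lemma eventually_two_asymmetric_solutions:
  assumes p: "p > 1" and lam: "pi\<^sup>2 / 4 < lam" "lam < pi\<^sup>2"
  shows "eventually (\<lambda>R. \<exists>L. 0 < L \<and> L < 1 / 2 \<and> L \<le> time_bound p lam R \<and>
           two_asymmetric_solutions p lam (1 - 2 * L) R) at_top"
proof -
  have lam_pos: "0 < lam" using lam(1) by (smt (verit) divide_pos_pos pi_gt_zero zero_less_power)
  have \<omega>: "pi / 2 < sqrt lam" "sqrt lam < pi"
    using real_less_rsqrt[of "pi / 2" lam] real_sqrt_less_mono[OF lam(2)] lam(1)
    by (simp_all add: power_divide)
  let ?b = "sqrt lam - angle_hi lam"
  have cos_pos: "0 < cos (angle_hi lam)" "0 < cos ?b"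
    using \<omega> by (auto simp: angle_hi_def field_simps intro!: cos_gt_zero_pi)
  define m where "m = min (2 * sqrt lam - pi) (pi - sqrt lam) / (8 * sqrt lam)"
  have "0 < m" unfolding m_def using \<omega> lam_pos by (intro divide_pos_pos) auto
  have "eventually (\<lambda>R :: real. 0 < R) at_top" by (rule eventually_gt_at_top)
  moreover have "eventually (\<lambda>R. time_bound p lam R < m) at_top"
    using tendsto_time_bound[OF p] \<open>0 < m\<close> by (rule order_tendstoD)
  moreover have "eventually (\<lambda>R. (1 / cos ?b) * R powr (2 / (p + 1)) < R powr 1) at_top"
    using p cos_pos by (intro eventually_mult_powr_less_powr) auto
  moreover note eventually_time_bound_less[OF p lam_pos cos_pos(1)]
  ultimately show ?thesis
  proof eventually_elim
    case (elim R)
    interpret time_map p lam R using p lam_pos elim(1) by unfold_locales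
    have "0 < 8 * sqrt lam" using lam_pos by simp
    then have "8 * sqrt lam * time_bound p lam R < min (2 * sqrt lam - pi) (pi - sqrt lam)"
      using elim(2) unfolding m_def by (simp add: pos_less_divide_eq mult.commute)
    then have small: "8 * sqrt lam * time_bound p lam R \<le> 2 * sqrt lam - pi"
      "8 * sqrt lam * time_bound p lam R \<le> pi - sqrt lam"
      by simp_all
    have "R powr (2 / (p + 1)) \<le> R * cos ?b" using elim(1,3) cos_pos(2) by (simp add: field_simps)
    then show ?case using two_asymmetric_solutions_exist[OF \<omega> small _ elim(4)] by blast
  qed
qed

theorem theorem5p1:
  fixes p lam :: real
  assumes "p > 1"
    and "pi\<^sup>2 / 4 < lam" and "lam < pi\<^sup>2"
  shows "\<exists>R_lam > 0. \<exists>h :: real \<Rightarrow> real.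
           (\<forall>R > R_lam. 0 < h R \<and> h R < 1 \<and>
              (\<exists>u v. (\<exists>x\<in>{0..1}. u x \<noteq> v x) \<and>
                 is_solution p lam (h R) u \<and> is_positive u \<and> is_asymmetric u \<and> sup_norm01 u = R \<and>
                 is_solution p lam (h R) v \<and> is_positive v \<and> is_asymmetric v \<and> sup_norm01 v = R)) \<and>
           (h \<longlongrightarrow> 1) at_top"
proof -
  have "eventually (\<lambda>R. \<exists>L. (0 < L \<and> L < 1 / 2 \<and> two_asymmetric_solutions p lam (1 - 2 * L) R) \<and>
      0 \<le> L \<and> L \<le> time_bound p lam R) at_top"
    using eventually_two_asymmetric_solutions[OF assms] by (rule eventually_mono) auto
  then obtain R\<^sub>0 and L :: "real \<Rightarrow> real" where "0 < R\<^sub>0"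
    and L: "\<And>R. R > R\<^sub>0 \<Longrightarrow> 0 < L R \<and> L R < 1 / 2 \<and> two_asymmetric_solutions p lam (1 - 2 * L R) R"
    and "(L \<longlongrightarrow> 0) at_top"
    by (rule eventually_choice_tendsto_zero[OF _ tendsto_time_bound[OF assms(1)]]) blast
  then have "((\<lambda>R. 1 - 2 * L R) \<longlongrightarrow> 1 - 2 * 0) at_top"
    by (intro tendsto_intros)
  then show ?thesis
    unfolding two_asymmetric_solutions_def[symmetric] using \<open>0 < R\<^sub>0\<close> L
    by (intro exI[of _ R\<^sub>0] conjI exI[of _ "\<lambda>R. 1 - 2 * L R"]) (auto dest: L)
qed

end
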